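(* Let $X$ be a continuous L-space with spatial part $Y$, and let $U\in{\sf ClopUp}(X)$. The following are equivalent: (1) $\ker U=\mathrm{core}\,U$; (2) $\mathrm{core}\,U$ is dense in $U$; (3) for each $y\in U\cap Y$ there is $V\in{\sf ClopSUp}(X)$ with $y\in V\subseteq U$; (4) for each Scott upset $F\subseteq\ker U$ there is $V\in{\sf ClopSUp}(X)$ with $F\subseteq V\subseteq U$.
   Context: A Priestley space is a Stone space $X$ with a partial order such that clopen upsets separate points. An L-space is a Priestley space in which the downset of each clopen set is clopen and the closure of each open upset is open. ${\sf ClopUp}(X)$ is the set of clopen upsets of $X$; $\mathrm{cl}$ denotes closure. The spatial part of $X$ is $Y=\{y\in X\mid{\downarrow}y\text{ is clopen}\}$. A Scott upset is a closed upset $F$ with $\min F\subseteq Y$; ${\sf ClopSUp}(X)$ is the set of clopen Scott upsets. For $U,V\in{\sf ClopUp}(X)$, write $V\ll U$ if for every open upset $W$ of $X$, $U\subseteq\mathrm{cl}\,W$ implies $V\subseteq W$. Define $\ker U=\bigcup\{V\in{\sf ClopUp}(X)\mid V\ll U\}$ and $\mathrm{core}\,U=\bigcup\{V\in{\sf ClopSUp}(X)\mid V\subseteq U\}$. $X$ is a continuous L-space if $\ker U$ is dense in $U$ for all $U\in{\sf ClopUp}(X)$. *)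

theory Defs
  imports "HOL-Analysis.Analysis"
begin

text \<open>An ordered topological space is given by a topology T on 'a (carrier topspace T)
  together with a relation le, intended as a partial order on topspace T.\<close>

definition clopenin :: "'a topology \<Rightarrow> 'a set \<Rightarrow> bool" where
  "clopenin T U \<longleftrightarrow> closedin T U \<and> openin T U"

definition upset :: "'a topology \<Rightarrow> ('a \<Rightarrow> 'a \<Rightarrow> bool) \<Rightarrow> 'a set \<Rightarrow> bool" where
  "upset T le U \<longleftrightarrow> U \<subseteq> topspace T \<and> (\<forall>x\<in>U. \<forall>y\<in>topspace T. le x y \<longrightarrow> y \<in> U)"

definition downclosure :: "'a topology \<Rightarrow> ('a \<Rightarrow> 'a \<Rightarrow> bool) \<Rightarrow> 'a set \<Rightarrow> 'a set" where
  "downclosure T le A = {y \<in> topspace T. \<exists>x\<in>A. le y x}"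

definition partial_order_on_space :: "'a topology \<Rightarrow> ('a \<Rightarrow> 'a \<Rightarrow> bool) \<Rightarrow> bool" where
  "partial_order_on_space T le \<longleftrightarrow>
     (\<forall>x\<in>topspace T. le x x) \<and>
     (\<forall>x\<in>topspace T. \<forall>y\<in>topspace T. le x y \<and> le y x \<longrightarrow> x = y) \<and>
     (\<forall>x\<in>topspace T. \<forall>y\<in>topspace T. \<forall>z\<in>topspace T. le x y \<and> le y z \<longrightarrow> le x z)"

definition stone_space :: "'a topology \<Rightarrow> bool" where
  "stone_space T \<longleftrightarrow> compact_space T \<and> Hausdorff_space T \<and>
     (\<forall>W x. openin T W \<and> x \<in> W \<longrightarrow> (\<exists>C. clopenin T C \<and> x \<in> C \<and> C \<subseteq> W))"

definition ClopUp :: "'a topology \<Rightarrow> ('a \<Rightarrow> 'a \<Rightarrow> bool) \<Rightarrow> 'a set set" where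
  "ClopUp T le = {U. clopenin T U \<and> upset T le U}"

definition priestley_space :: "'a topology \<Rightarrow> ('a \<Rightarrow> 'a \<Rightarrow> bool) \<Rightarrow> bool" where
  "priestley_space T le \<longleftrightarrow> stone_space T \<and> partial_order_on_space T le \<and>
     (\<forall>x\<in>topspace T. \<forall>y\<in>topspace T. \<not> le x y \<longrightarrow> (\<exists>U\<in>ClopUp T le. x \<in> U \<and> y \<notin> U))"

definition L_space :: "'a topology \<Rightarrow> ('a \<Rightarrow> 'a \<Rightarrow> bool) \<Rightarrow> bool" where
  "L_space T le \<longleftrightarrow> priestley_space T le \<and>
     (\<forall>U. clopenin T U \<longrightarrow> clopenin T (downclosure T le U)) \<and>
     (\<forall>U. openin T U \<and> upset T le U \<longrightarrow> openin T (T closure_of U))"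

definition spatial_part :: "'a topology \<Rightarrow> ('a \<Rightarrow> 'a \<Rightarrow> bool) \<Rightarrow> 'a set" where
  "spatial_part T le = {y \<in> topspace T. clopenin T (downclosure T le {y})}"

definition minimals :: "('a \<Rightarrow> 'a \<Rightarrow> bool) \<Rightarrow> 'a set \<Rightarrow> 'a set" where
  "minimals le F = {x \<in> F. \<forall>z\<in>F. le z x \<longrightarrow> z = x}"

definition scott_upset :: "'a topology \<Rightarrow> ('a \<Rightarrow> 'a \<Rightarrow> bool) \<Rightarrow> 'a set \<Rightarrow> bool" where
  "scott_upset T le F \<longleftrightarrow> closedin T F \<and> upset T le F \<and> minimals le F \<subseteq> spatial_part T le"

definition ClopSUp :: "'a topology \<Rightarrow> ('a \<Rightarrow> 'a \<Rightarrow> bool) \<Rightarrow> 'a set set" where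
  "ClopSUp T le = {U \<in> ClopUp T le. scott_upset T le U}"

definition way_below :: "'a topology \<Rightarrow> ('a \<Rightarrow> 'a \<Rightarrow> bool) \<Rightarrow> 'a set \<Rightarrow> 'a set \<Rightarrow> bool" where
  "way_below T le V U \<longleftrightarrow>
     (\<forall>W. openin T W \<and> upset T le W \<and> U \<subseteq> T closure_of W \<longrightarrow> V \<subseteq> W)"

definition ker :: "'a topology \<Rightarrow> ('a \<Rightarrow> 'a \<Rightarrow> bool) \<Rightarrow> 'a set \<Rightarrow> 'a set" where
  "ker T le U = \<Union>{V \<in> ClopUp T le. way_below T le V U}"

definition core :: "'a topology \<Rightarrow> ('a \<Rightarrow> 'a \<Rightarrow> bool) \<Rightarrow> 'a set \<Rightarrow> 'a set" where
  "core T le U = \<Union>{V \<in> ClopSUp T le. V \<subseteq> U}"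

text \<open>A set A is dense in U when U is contained in the closure of A.\<close>
definition continuous_L_space :: "'a topology \<Rightarrow> ('a \<Rightarrow> 'a \<Rightarrow> bool) \<Rightarrow> bool" where
  "continuous_L_space T le \<longleftrightarrow> L_space T le \<and>
     (\<forall>U\<in>ClopUp T le. U \<subseteq> T closure_of (ker T le U))"

end

theory Submission
  imports Defs
begin

(* The crux is that in a continuous L-space every nonempty difference A - C of clopen upsets
   contains a spatial point. Take v in ker A - C and a clopen upset V << A containing v.
   Interpolating repeatedly gives clopen upsets A >> B_1 >> B_2 >> ..., all way above V, and by
   compactness their intersection F is way below itself. A minimal point y of F below v then lies
   in A but not in C, and it is spatial: y is not in the closure of the open upset X - down y, so
   down y is the complement of that clopen closure.
   Given this, (3) implies (2) because the closure of core U is a clopen upset containing every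
   spatial point of U, while (2) implies (3) because a spatial point in the closure of an upset lies
   in the upset. For (1) and (2), density of ker U and core U <= ker U suffice, the latter because
   clopen Scott upsets are way below themselves. Finally (3) gives (4) by compactness of Scott
   upsets, whose minimal points are spatial, and (4) applied to up y gives (3). *)

lemma priestley_refl: "priestley_space T le \<Longrightarrow> x \<in> topspace T \<Longrightarrow> le x x"
  by (auto simp: priestley_space_def partial_order_on_space_def)

lemma priestley_antisym:
  "priestley_space T le \<Longrightarrow> x \<in> topspace T \<Longrightarrow> y \<in> topspace T \<Longrightarrow> le x y \<Longrightarrow> le y x \<Longrightarrow> x = y"
  unfolding priestley_space_def partial_order_on_space_def by blast

lemma priestley_trans:
  "priestley_space T le \<Longrightarrow> x \<in> topspace T \<Longrightarrow> y \<in> topspace T \<Longrightarrow> z \<in> topspace T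
    \<Longrightarrow> le x y \<Longrightarrow> le y z \<Longrightarrow> le x z"
  unfolding priestley_space_def partial_order_on_space_def by blast

lemma priestley_separation:
  "priestley_space T le \<Longrightarrow> x \<in> topspace T \<Longrightarrow> y \<in> topspace T \<Longrightarrow> \<not> le x y
    \<Longrightarrow> \<exists>U\<in>ClopUp T le. x \<in> U \<and> y \<notin> U"
  unfolding priestley_space_def by blast

lemma priestley_compact_space: "priestley_space T le \<Longrightarrow> compact_space T"
  by (simp add: priestley_space_def stone_space_def)

lemma priestley_clopen_base:
  "priestley_space T le \<Longrightarrow> openin T W \<Longrightarrow> x \<in> W \<Longrightarrow> \<exists>C. clopenin T C \<and> x \<in> C \<and> C \<subseteq> W"
  by (simp add: priestley_space_def stone_space_def)

lemma L_space_priestley: "L_space T le \<Longrightarrow> priestley_space T le"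
  by (simp add: L_space_def)

lemma L_space_clopen_downclosure:
  "L_space T le \<Longrightarrow> clopenin T U \<Longrightarrow> clopenin T (downclosure T le U)"
  by (simp add: L_space_def)

lemma L_space_openin_closure_of:
  "L_space T le \<Longrightarrow> openin T U \<Longrightarrow> upset T le U \<Longrightarrow> openin T (T closure_of U)"
  by (simp add: L_space_def)

lemma continuous_L_space_L_space: "continuous_L_space T le \<Longrightarrow> L_space T le"
  by (simp add: continuous_L_space_def)

lemma continuous_L_space_priestley: "continuous_L_space T le \<Longrightarrow> priestley_space T le"
  by (simp add: continuous_L_space_L_space L_space_priestley)

lemma continuous_L_space_dense_ker:
  "continuous_L_space T le \<Longrightarrow> U \<in> ClopUp T le \<Longrightarrow> U \<subseteq> T closure_of (ker T le U)"
  by (simp add: continuous_L_space_def)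

lemma ClopUp_openin: "U \<in> ClopUp T le \<Longrightarrow> openin T U"
  and ClopUp_closedin: "U \<in> ClopUp T le \<Longrightarrow> closedin T U"
  and ClopUp_upset: "U \<in> ClopUp T le \<Longrightarrow> upset T le U"
  by (simp_all add: ClopUp_def clopenin_def)

lemma topspace_ClopUp: "topspace T \<in> ClopUp T le"
  by (simp add: ClopUp_def clopenin_def upset_def)

lemma upset_subset_topspace: "upset T le U \<Longrightarrow> U \<subseteq> topspace T"
  by (simp add: upset_def)

lemma upsetD: "upset T le U \<Longrightarrow> x \<in> U \<Longrightarrow> y \<in> topspace T \<Longrightarrow> le x y \<Longrightarrow> y \<in> U"
  by (auto simp: upset_def)

lemma upset_Union: "(\<And>S. S \<in> \<S> \<Longrightarrow> upset T le S) \<Longrightarrow> upset T le (\<Union>\<S>)"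
  unfolding upset_def by blast

lemma upset_principal:
  assumes P: "priestley_space T le" and y: "y \<in> topspace T"
  shows "upset T le {u \<in> topspace T. le y u}"
  unfolding upset_def by (blast intro: priestley_trans[OF P y])

lemma upset_Diff_principal_down:
  assumes P: "priestley_space T le" and y: "y \<in> topspace T"
  shows "upset T le (topspace T - {u \<in> topspace T. le u y})"
  unfolding upset_def by (blast intro: priestley_trans[OF P _ _ y])

lemma closedin_principal_down:
  assumes P: "priestley_space T le" and z: "z \<in> topspace T"
  shows "closedin T {u \<in> topspace T. le u z}"
proof -
  have "topspace T - {u \<in> topspace T. le u z} = \<Union>{U \<in> ClopUp T le. z \<notin> U}"
  proof
    show "topspace T - {u \<in> topspace T. le u z} \<subseteq> \<Union>{U \<in> ClopUp T le. z \<notin> U}"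
      using priestley_separation[OF P _ z] by blast
    show "\<Union>{U \<in> ClopUp T le. z \<notin> U} \<subseteq> topspace T - {u \<in> topspace T. le u z}"
      using z by (auto simp: ClopUp_def upset_def)
  qed
  moreover have "openin T (\<Union>{U \<in> ClopUp T le. z \<notin> U})"
    by (intro openin_Union) (blast intro: ClopUp_openin)
  ultimately show ?thesis
    by (simp add: closedin_def)
qed

lemma closedin_principal_up:
  assumes P: "priestley_space T le" and z: "z \<in> topspace T"
  shows "closedin T {u \<in> topspace T. le z u}"
proof -
  have "{u \<in> topspace T. le z u} = \<Inter>{U \<in> ClopUp T le. z \<in> U}"
    using priestley_separation[OF P z] topspace_ClopUp z by (blast dest: ClopUp_upset upsetD)
  also have "closedin T \<dots>"
    using topspace_ClopUp[of T le] z by (intro closedin_Inter) (auto simp: ClopUp_closedin)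
  finally show ?thesis .
qed

lemma compact_space_Inter_chain_nonempty:
  assumes X: "compact_space X" and chain: "subset.chain UNIV \<C>"
    and C: "\<And>C. C \<in> \<C> \<Longrightarrow> closedin X C \<and> C \<noteq> {}"
  shows "\<Inter>\<C> \<noteq> {}"
proof (rule X[unfolded compact_space_fip, rule_format], intro conjI allI impI ballI)
  show "closedin X C" if "C \<in> \<C>" for C
    using C that by blast
  fix \<F> assume \<F>: "finite \<F> \<and> \<F> \<subseteq> \<C>"
  show "\<Inter>\<F> \<noteq> {}"
  proof (cases "\<F> = {}")
    case False
    have "subset.chain UNIV \<F>"
      using chain \<F> by (auto simp: subset.chain_def)
    then have "\<Inter>\<F> \<in> \<F>"
      using Inter_in_chain \<F> False by blast
    then show ?thesis using C \<F> by blast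
  qed simp
qed

lemma priestley_exists_minimal_below:
  assumes P: "priestley_space T le" and F: "closedin T F" and x: "x \<in> F"
  shows "\<exists>m\<in>minimals le F. le m x"
proof -
  have FX: "F \<subseteq> topspace T" using F by (rule closedin_subset)
  note trans = priestley_trans[OF P]
  define A where "A = {z \<in> F. le z x}"
  define K where "K z = F \<inter> {u \<in> topspace T. le u z}" for z
  have po: "partial_order_on A (relation_of (\<lambda>a b. le b a) A)"
  proof (rule partial_order_on_relation_ofI)
    show "le a a" if "a \<in> A" for a
      using that FX priestley_refl[OF P] by (auto simp: A_def)
    show "le c a" if "a \<in> A" "b \<in> A" "c \<in> A" "le b a" "le c b" for a b c
      using that FX trans[of c b a] by (auto simp: A_def)
    show "a = b" if "a \<in> A" "b \<in> A" "le b a" "le a b" for a b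
      using that FX priestley_antisym[OF P, of a b] by (auto simp: A_def)
  qed
  txt \<open>Zorn's lemma for the reverse order on \<open>A\<close>: the closed sets \<open>K c\<close> for \<open>c\<close> in a chain
    form a chain, so by compactness they have a common point, which is a lower bound.\<close>
  have "\<exists>w\<in>A. \<forall>c\<in>C. le w c" if C: "C \<in> Chains (relation_of (\<lambda>a b. le b a) A)" for C
  proof -
    have CA: "C \<subseteq> A" using Chains_relation_of[OF C] .
    then have xCF: "insert x C \<subseteq> F" using x by (auto simp: A_def)
    have "K c \<subseteq> K d" if "c \<in> insert x C" "d \<in> insert x C" "le c d" for c d
      using that xCF FX trans[of _ c d] by (auto simp: K_def)
    moreover have "le c d \<or> le d c" if "c \<in> insert x C" "d \<in> insert x C" for c d
      using that C CA x FX priestley_refl[OF P] by (auto simp: Chains_def relation_of_def A_def)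
    ultimately have "subset.chain UNIV (K ` insert x C)"
      unfolding subset.chain_def by blast
    moreover have "closedin T (K c) \<and> K c \<noteq> {}" if "c \<in> insert x C" for c
    proof
      have "c \<in> F" using that xCF by blast
      then show "closedin T (K c)"
        using F FX closedin_principal_down[OF P] by (auto simp: K_def intro!: closedin_Int)
      show "K c \<noteq> {}"
        using \<open>c \<in> F\<close> FX priestley_refl[OF P] by (auto simp: K_def)
    qed
    ultimately have "\<Inter>(K ` insert x C) \<noteq> {}"
      using compact_space_Inter_chain_nonempty[OF priestley_compact_space[OF P]] by blast
    then obtain w where w: "w \<in> \<Inter>(K ` insert x C)" by blast
    have "w \<in> K c" if "c \<in> insert x C" for c
      using w that by blast
    then have "w \<in> A" and "\<forall>c\<in>C. le w c"
      by (auto simp: K_def A_def)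
    then show ?thesis by blast
  qed
  then obtain m where m: "m \<in> A" and min: "\<And>a. a \<in> A \<Longrightarrow> le a m \<Longrightarrow> a = m"
    using predicate_Zorn[OF po] by blast
  have "m \<in> minimals le F"
    unfolding minimals_def
  proof (intro CollectI conjI ballI impI)
    show "m \<in> F" using m by (simp add: A_def)
    fix z assume "z \<in> F" "le z m"
    then show "z = m"
      using m FX x trans[of z m x] min by (auto simp: A_def)
  qed
  then show ?thesis using m by (auto simp: A_def)
qed

lemma closure_of_meets_openin: "x \<in> X closure_of S \<Longrightarrow> openin X U \<Longrightarrow> x \<in> U \<Longrightarrow> \<exists>y\<in>S. y \<in> U"
  by (auto simp: in_closure_of)

lemma upset_closure_of:
  assumes L: "L_space T le" and W: "upset T le W"
  shows "upset T le (T closure_of W)"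
  unfolding upset_def
proof (intro conjI ballI impI closure_of_subset_topspace)
  have P: "priestley_space T le" using L by (rule L_space_priestley)
  fix a b assume a: "a \<in> T closure_of W" and b: "b \<in> topspace T" and ab: "le a b"
  show "b \<in> T closure_of W"
  proof (rule ccontr)
    assume "b \<notin> T closure_of W"
    then obtain C where C: "clopenin T C" "b \<in> C" "C \<inter> T closure_of W = {}"
      using priestley_clopen_base[OF P, of "topspace T - T closure_of W" b] b
      by (auto simp: openin_diff)
    have "a \<in> downclosure T le C"
      using a C(2) ab by (auto simp: downclosure_def in_closure_of)
    moreover have "openin T (downclosure T le C)"
      using L_space_clopen_downclosure[OF L C(1)] by (simp add: clopenin_def)
    ultimately obtain w where "w \<in> W" "w \<in> downclosure T le C"
      using closure_of_meets_openin[OF a] by blast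
    then obtain c where "w \<in> W" "c \<in> C" "le w c"
      by (auto simp: downclosure_def)
    then have "c \<in> T closure_of W"
      using W C(1) closure_of_subset[OF upset_subset_topspace[OF W]]
      by (auto simp: clopenin_def dest: openin_subset upsetD)
    then show False using C \<open>c \<in> C\<close> by blast
  qed
qed

lemma spatial_mem_upset_of_mem_closure:
  assumes P: "priestley_space T le" and y: "y \<in> spatial_part T le"
    and W: "upset T le W" and yW: "y \<in> T closure_of W"
  shows "y \<in> W"
proof (rule ccontr)
  assume "y \<notin> W"
  let ?D = "downclosure T le {y}"
  have yX: "y \<in> topspace T" and D: "openin T ?D"
    using y by (auto simp: spatial_part_def clopenin_def)
  have "y \<in> ?D" using yX priestley_refl[OF P yX] by (auto simp: downclosure_def)
  then obtain w where "w \<in> W" "w \<in> ?D"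
    using closure_of_meets_openin[OF yW D] by blast
  then show False
    using W yX \<open>y \<notin> W\<close> by (auto simp: downclosure_def dest: upsetD)
qed

lemma way_below_mono:
  "way_below T le V U \<Longrightarrow> V' \<subseteq> V \<Longrightarrow> U \<subseteq> U' \<Longrightarrow> way_below T le V' U'"
  unfolding way_below_def by blast

lemma way_below_Union:
  "(\<And>E. E \<in> \<E> \<Longrightarrow> way_below T le E U) \<Longrightarrow> V \<subseteq> \<Union>\<E> \<Longrightarrow> way_below T le V U"
  unfolding way_below_def by blast

lemma way_below_ClopUp_subset:
  assumes "way_below T le V U" "U \<in> ClopUp T le"
  shows "V \<subseteq> U"
proof -
  have "U \<subseteq> T closure_of U"
    using closure_of_subset[OF upset_subset_topspace[OF ClopUp_upset[OF assms(2)]]] .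
  then show ?thesis
    using assms(1) ClopUp_openin[OF assms(2)] ClopUp_upset[OF assms(2)]
    unfolding way_below_def by blast
qed

lemma upset_ker: "upset T le (ker T le U)"
  unfolding ker_def by (intro upset_Union) (blast intro: ClopUp_upset)

lemma ker_subset: "U \<in> ClopUp T le \<Longrightarrow> ker T le U \<subseteq> U"
  unfolding ker_def using way_below_ClopUp_subset by blast

lemma openin_core: "openin T (core T le U)"
  unfolding core_def ClopSUp_def by (intro openin_Union) (blast intro: ClopUp_openin)

lemma upset_core: "upset T le (core T le U)"
  unfolding core_def ClopSUp_def by (intro upset_Union) (blast intro: ClopUp_upset)

lemma core_subset: "core T le U \<subseteq> U"
  unfolding core_def by blast

lemma mem_core_iff: "y \<in> core T le U \<longleftrightarrow> (\<exists>V\<in>ClopSUp T le. y \<in> V \<and> V \<subseteq> U)"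
  unfolding core_def by blast

lemma Union_ClopUp: "finite \<F> \<Longrightarrow> \<F> \<subseteq> ClopUp T le \<Longrightarrow> \<Union>\<F> \<in> ClopUp T le"
  unfolding ClopUp_def clopenin_def
  by (auto intro!: closedin_Union openin_Union upset_Union)

lemma Union_ClopSUp:
  assumes "finite \<F>" "\<F> \<subseteq> ClopSUp T le"
  shows "\<Union>\<F> \<in> ClopSUp T le"
proof -
  have "minimals le (\<Union>\<F>) \<subseteq> \<Union>((minimals le) ` \<F>)"
    unfolding minimals_def by blast
  also have "\<dots> \<subseteq> spatial_part T le"
    using assms(2) by (auto simp: ClopSUp_def scott_upset_def)
  finally show ?thesis
    using assms Union_ClopUp[of \<F> T le]
    by (auto simp: ClopSUp_def scott_upset_def ClopUp_def clopenin_def)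
qed

lemma upset_subset_if_minimals_subset:
  assumes P: "priestley_space T le" and F: "closedin T F" and W: "upset T le W"
    and min: "minimals le F \<subseteq> W"
  shows "F \<subseteq> W"
proof
  fix x assume "x \<in> F"
  then obtain m where "m \<in> minimals le F" "le m x"
    using priestley_exists_minimal_below[OF P F] by blast
  then show "x \<in> W"
    using min W \<open>x \<in> F\<close> closedin_subset[OF F] by (blast dest: upsetD)
qed

lemma scott_upset_way_below_self:
  assumes P: "priestley_space T le" and F: "scott_upset T le F"
  shows "way_below T le F F"
  unfolding way_below_def
proof (intro allI impI)
  fix W assume W: "openin T W \<and> upset T le W \<and> F \<subseteq> T closure_of W"
  have "minimals le F \<subseteq> W"
  proof
    fix m assume m: "m \<in> minimals le F"
    then have "m \<in> spatial_part T le" "m \<in> T closure_of W"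
      using F W by (auto simp: scott_upset_def minimals_def)
    then show "m \<in> W" using spatial_mem_upset_of_mem_closure[OF P] W by blast
  qed
  then show "F \<subseteq> W"
    using upset_subset_if_minimals_subset[OF P] F W by (simp add: scott_upset_def)
qed

lemma core_subset_ker:
  assumes P: "priestley_space T le"
  shows "core T le U \<subseteq> ker T le U"
  unfolding core_def ker_def ClopSUp_def
  using scott_upset_way_below_self[OF P] way_below_mono by blast

lemma scott_upset_principal:
  assumes P: "priestley_space T le" and y: "y \<in> spatial_part T le"
  shows "scott_upset T le {u \<in> topspace T. le y u}"
proof -
  have yX: "y \<in> topspace T" using y by (simp add: spatial_part_def)
  have "minimals le {u \<in> topspace T. le y u} \<subseteq> {y}"
    using yX priestley_refl[OF P yX] by (auto simp: minimals_def)
  then show ?thesis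
    using y closedin_principal_up[OF P yX] upset_principal[OF P yX]
    by (auto simp: scott_upset_def)
qed

lemma exists_ClopSUp_between:
  assumes P: "priestley_space T le" and F: "closedin T F" and FU: "F \<subseteq> core T le U"
  shows "\<exists>V\<in>ClopSUp T le. F \<subseteq> V \<and> V \<subseteq> U"
proof -
  have "compactin T F"
    using closedin_compact_space[OF priestley_compact_space[OF P] F] .
  moreover have "\<forall>V\<in>{V \<in> ClopSUp T le. V \<subseteq> U}. openin T V"
    by (auto simp: ClopSUp_def ClopUp_openin)
  ultimately obtain \<F> where \<F>: "finite \<F>" "\<F> \<subseteq> {V \<in> ClopSUp T le. V \<subseteq> U}" "F \<subseteq> \<Union>\<F>"
    using FU unfolding core_def compactin_def by (metis (no_types, lifting))
  then have "\<Union>\<F> \<in> ClopSUp T le"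
    by (intro Union_ClopSUp) auto
  then show ?thesis using \<F> by blast
qed

lemma compact_space_decseq_subset_openin:
  assumes X: "compact_space X" and C: "\<And>n. closedin X (C n)" and dec: "decseq C"
    and W: "openin X W" and CW: "(\<Inter>n. C n) \<subseteq> W"
  obtains N where "C N \<subseteq> W"
proof -
  have "(\<Inter>n. C n - W) = {}" using CW by blast
  moreover have "decseq (\<lambda>n. C n - W)"
    using dec by (auto simp: decseq_def)
  ultimately obtain N where "C N - W = {}"
    using compact_space_imp_nest[OF X, of "\<lambda>n. C n - W"] C W by (auto simp: closedin_diff)
  then show thesis using that by blast
qed

lemma dense_Union_ker_way_below:
  assumes cL: "continuous_L_space T le" and A: "A \<in> ClopUp T le"
  shows "A \<subseteq> T closure_of (\<Union>D\<in>{D \<in> ClopUp T le. way_below T le D A}. ker T le D)"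
    (is "_ \<subseteq> T closure_of ?W")
proof -
  have "D \<subseteq> T closure_of ?W" if "D \<in> ClopUp T le" "way_below T le D A" for D
  proof -
    have "ker T le D \<subseteq> ?W" using that by blast
    then show ?thesis
      using continuous_L_space_dense_ker[OF cL that(1)] closure_of_mono by blast
  qed
  then have "ker T le A \<subseteq> T closure_of ?W"
    unfolding ker_def by blast
  then have "T closure_of (ker T le A) \<subseteq> T closure_of ?W"
    by (simp add: closure_of_minimal)
  then show ?thesis
    using continuous_L_space_dense_ker[OF cL A] by blast
qed

lemma way_below_interpolate:
  assumes cL: "continuous_L_space T le" and A: "A \<in> ClopUp T le"
    and V: "compactin T V" and VA: "way_below T le V A"
  shows "\<exists>D\<in>ClopUp T le. way_below T le V D \<and> way_below T le D A"
proof -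
  define \<D> where "\<D> = {D \<in> ClopUp T le. way_below T le D A}"
  define \<E> where "\<E> = {E \<in> ClopUp T le. \<exists>D\<in>\<D>. way_below T le E D}"
  have "(\<Union>D\<in>\<D>. ker T le D) = \<Union>\<E>"
    by (auto simp: ker_def \<E>_def)
  then have "A \<subseteq> T closure_of (\<Union>\<E>)"
    using dense_Union_ker_way_below[OF cL A] by (simp add: \<D>_def)
  moreover have "openin T (\<Union>\<E>)" "upset T le (\<Union>\<E>)"
    by (auto intro!: openin_Union upset_Union simp: \<E>_def ClopUp_openin ClopUp_upset)
  ultimately have "V \<subseteq> \<Union>\<E>"
    using VA by (simp add: way_below_def)
  moreover have "\<forall>E\<in>\<E>. openin T E"
    by (auto simp: \<E>_def ClopUp_openin)
  ultimately obtain \<F> where \<F>: "finite \<F>" "\<F> \<subseteq> \<E>" "V \<subseteq> \<Union>\<F>"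
    using V[unfolded compactin_def, THEN conjunct2, rule_format, of \<E>] by blast
  then have "\<forall>E\<in>\<F>. \<exists>D. D \<in> \<D> \<and> way_below T le E D"
    by (auto simp: \<E>_def)
  then obtain g where g: "\<And>E. E \<in> \<F> \<Longrightarrow> g E \<in> \<D> \<and> way_below T le E (g E)"
    by metis
  define D where "D = \<Union>(g ` \<F>)"
  have "D \<in> ClopUp T le"
    unfolding D_def using g \<F>(1) by (intro Union_ClopUp) (auto simp: \<D>_def)
  moreover have "way_below T le D A"
    unfolding D_def using g by (auto simp: \<D>_def intro: way_below_Union[of "g ` \<F>"])
  moreover have "way_below T le V D"
  proof (rule way_below_Union[OF _ \<F>(3)])
    show "way_below T le E D" if "E \<in> \<F>" for E
      using g[OF that] that by (auto simp: D_def elim!: way_below_mono)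
  qed
  ultimately show ?thesis by blast
qed

lemma way_below_descending_sequence:
  assumes cL: "continuous_L_space T le" and A: "A \<in> ClopUp T le"
    and V: "V \<in> ClopUp T le" and VA: "way_below T le V A"
  obtains B where "\<And>n. B n \<in> ClopUp T le" "\<And>n. B n \<subseteq> A"
    "\<And>n. way_below T le V (B n)" "\<And>n. way_below T le (B (Suc n)) (B n)"
proof -
  have Vc: "compactin T V"
    using V priestley_compact_space[OF continuous_L_space_priestley[OF cL]]
    by (simp add: ClopUp_closedin closedin_compact_space)
  have "\<exists>B. \<forall>n. (B n \<in> ClopUp T le \<and> way_below T le V (B n) \<and> B n \<subseteq> A)
                \<and> way_below T le (B (Suc n)) (B n)"
  proof (rule dependent_nat_choice)
    show "\<exists>D. D \<in> ClopUp T le \<and> way_below T le V D \<and> D \<subseteq> A"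
      using A VA by blast
    fix D and n :: nat assume D: "D \<in> ClopUp T le \<and> way_below T le V D \<and> D \<subseteq> A"
    then obtain D' where D': "D' \<in> ClopUp T le" "way_below T le V D'" "way_below T le D' D"
      using way_below_interpolate[OF cL _ Vc] by blast
    then have "D' \<subseteq> A" using D way_below_ClopUp_subset by blast
    then show "\<exists>D'. (D' \<in> ClopUp T le \<and> way_below T le V D' \<and> D' \<subseteq> A) \<and> way_below T le D' D"
      using D' by blast
  qed
  then show thesis using that by blast
qed

lemma way_below_self_Inter:
  assumes L: "L_space T le" and B: "\<And>n. B n \<in> ClopUp T le"
    and step: "\<And>n. way_below T le (B (Suc n)) (B n)"
  shows "way_below T le (\<Inter>n. B n) (\<Inter>n. B n)"
  unfolding way_below_def
proof (intro allI impI)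
  fix W assume W: "openin T W \<and> upset T le W \<and> (\<Inter>n. B n) \<subseteq> T closure_of W"
  have "decseq B"
    using way_below_ClopUp_subset[OF step B] by (intro decseq_SucI) blast
  then obtain N where "B N \<subseteq> T closure_of W"
    using compact_space_decseq_subset_openin[OF priestley_compact_space[OF L_space_priestley[OF L]]]
      B W L_space_openin_closure_of[OF L] ClopUp_closedin by metis
  then have "B (Suc N) \<subseteq> W"
    using step W unfolding way_below_def by blast
  then show "(\<Inter>n. B n) \<subseteq> W" by blast
qed

lemma way_below_self_imp_minimals_spatial:
  assumes L: "L_space T le" and FX: "F \<subseteq> topspace T" and F: "way_below T le F F"
  shows "minimals le F \<subseteq> spatial_part T le"
proof
  have P: "priestley_space T le" using L by (rule L_space_priestley)
  fix y assume y: "y \<in> minimals le F"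
  then have yF: "y \<in> F" and yX: "y \<in> topspace T" using FX by (auto simp: minimals_def)
  define W where "W = topspace T - {u \<in> topspace T. le u y}"
  have W: "openin T W" "upset T le W"
    using closedin_principal_down[OF P yX] upset_Diff_principal_down[OF P yX]
    by (auto simp: W_def closedin_def)
  have "y \<notin> T closure_of W"
  proof
    assume "y \<in> T closure_of W"
    then have "F \<subseteq> T closure_of W"
      using y FX closure_of_subset[of W T] by (auto simp: minimals_def W_def)
    then have "y \<in> W" using F W yF by (auto simp: way_below_def)
    then show False using priestley_refl[OF P yX] by (simp add: W_def)
  qed
  then have "downclosure T le {y} = topspace T - T closure_of W"
    using upset_closure_of[OF L W(2)] closure_of_subset[of W T] yX
    by (auto simp: downclosure_def W_def dest: upsetD)
  moreover have "clopenin T (T closure_of W)"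
    using L_space_openin_closure_of[OF L W] by (simp add: clopenin_def)
  ultimately show "y \<in> spatial_part T le"
    using yX by (simp add: spatial_part_def clopenin_def closedin_diff openin_diff)
qed

lemma spatial_point_in_Diff:
  assumes cL: "continuous_L_space T le" and A: "A \<in> ClopUp T le" and C: "C \<in> ClopUp T le"
    and AC: "\<not> A \<subseteq> C"
  obtains y where "y \<in> spatial_part T le" "y \<in> A" "y \<notin> C"
proof -
  have L: "L_space T le" using cL by (rule continuous_L_space_L_space)
  have P: "priestley_space T le" using L by (rule L_space_priestley)
  obtain x where x: "x \<in> A" "x \<notin> C" using AC by blast
  have "x \<in> T closure_of (ker T le A)" "openin T (topspace T - C)"
    using continuous_L_space_dense_ker[OF cL A] x(1) C by (auto simp: ClopUp_closedin)
  moreover have "x \<in> topspace T - C"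
    using x upset_subset_topspace[OF ClopUp_upset[OF A]] by blast
  ultimately obtain v where v: "v \<in> ker T le A" "v \<notin> C"
    using closure_of_meets_openin[of x T "ker T le A" "topspace T - C"] by blast
  then obtain V where V: "V \<in> ClopUp T le" "way_below T le V A" "v \<in> V"
    by (auto simp: ker_def)
  obtain B where B: "\<And>n. B n \<in> ClopUp T le" "\<And>n. B n \<subseteq> A"
    "\<And>n. way_below T le V (B n)" "\<And>n. way_below T le (B (Suc n)) (B n)"
    using way_below_descending_sequence[OF cL A V(1,2)] by blast
  define F where "F = (\<Inter>n. B n)"
  have F: "closedin T F" "v \<in> F" "F \<subseteq> A"
    using B(1,2) way_below_ClopUp_subset[OF B(3)] V(3) unfolding F_def
    by (blast intro: closedin_Inter ClopUp_closedin)+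
  then obtain y where y: "y \<in> minimals le F" "le y v"
    using priestley_exists_minimal_below[OF P] by blast
  have yF: "y \<in> F" using y(1) by (simp add: minimals_def)
  have "way_below T le F F"
    unfolding F_def by (rule way_below_self_Inter[OF L]) (use B in auto)
  then have "y \<in> spatial_part T le"
    using way_below_self_imp_minimals_spatial[OF L closedin_subset[OF F(1)]] y(1) by blast
  moreover have "y \<notin> C"
    using upsetD[OF ClopUp_upset[OF C] _ _ y(2)] v(2) closedin_subset[OF F(1)] F(2) by blast
  ultimately show thesis
    using that yF F(3) by blast
qed

lemma ker_eq_core_iff_dense_core:
  assumes cL: "continuous_L_space T le" and U: "U \<in> ClopUp T le"
  shows "ker T le U = core T le U \<longleftrightarrow> U \<subseteq> T closure_of (core T le U)"
proof
  assume "ker T le U = core T le U"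
  then show "U \<subseteq> T closure_of (core T le U)"
    using continuous_L_space_dense_ker[OF cL U] by simp
next
  assume dense: "U \<subseteq> T closure_of (core T le U)"
  have "V \<subseteq> core T le U" if "way_below T le V U" for V
    using that openin_core[of T le U] upset_core[of T le U] dense by (auto simp: way_below_def)
  then have "ker T le U \<subseteq> core T le U"
    unfolding ker_def by blast
  then show "ker T le U = core T le U"
    using core_subset_ker[OF continuous_L_space_priestley[OF cL]] by blast
qed

lemma dense_core_iff_spatial_subset_core:
  assumes cL: "continuous_L_space T le" and U: "U \<in> ClopUp T le"
  shows "U \<subseteq> T closure_of (core T le U) \<longleftrightarrow> U \<inter> spatial_part T le \<subseteq> core T le U"
proof
  assume "U \<subseteq> T closure_of (core T le U)"
  then show "U \<inter> spatial_part T le \<subseteq> core T le U"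
    using spatial_mem_upset_of_mem_closure[OF continuous_L_space_priestley[OF cL] _
        upset_core[of T le U]] by blast
next
  assume spatial: "U \<inter> spatial_part T le \<subseteq> core T le U"
  have L: "L_space T le" using cL by (rule continuous_L_space_L_space)
  let ?K = "T closure_of (core T le U)"
  have K: "?K \<in> ClopUp T le"
    using L_space_openin_closure_of[OF L openin_core upset_core] upset_closure_of[OF L upset_core]
    by (simp add: ClopUp_def clopenin_def)
  have core_K: "core T le U \<subseteq> ?K"
    using closure_of_subset[OF order_trans[OF core_subset upset_subset_topspace[OF ClopUp_upset[OF U]]]] .
  show "U \<subseteq> ?K"
  proof (rule ccontr)
    assume "\<not> U \<subseteq> ?K"
    then obtain y where "y \<in> spatial_part T le" "y \<in> U" "y \<notin> ?K"
      by (rule spatial_point_in_Diff[OF cL U K])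
    then show False using spatial core_K by blast
  qed
qed

lemma spatial_subset_core_iff_scott_upsets_covered:
  assumes cL: "continuous_L_space T le" and U: "U \<in> ClopUp T le"
  shows "U \<inter> spatial_part T le \<subseteq> core T le U \<longleftrightarrow>
    (\<forall>F. scott_upset T le F \<and> F \<subseteq> ker T le U \<longrightarrow> (\<exists>V\<in>ClopSUp T le. F \<subseteq> V \<and> V \<subseteq> U))"
proof -
  have P: "priestley_space T le"
    using continuous_L_space_priestley[OF cL] .
  show ?thesis
  proof (intro iffI allI impI)
    fix F assume spatial: "U \<inter> spatial_part T le \<subseteq> core T le U"
      and F: "scott_upset T le F \<and> F \<subseteq> ker T le U"
    have "minimals le F \<subseteq> F" "minimals le F \<subseteq> spatial_part T le"
      using F by (auto simp: scott_upset_def minimals_def)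
    then have "minimals le F \<subseteq> U \<inter> spatial_part T le"
      using F ker_subset[OF U] by blast
    then have "minimals le F \<subseteq> core T le U"
      using spatial by blast
    moreover have "closedin T F"
      using F by (simp add: scott_upset_def)
    ultimately have "F \<subseteq> core T le U"
      using upset_subset_if_minimals_subset[OF P _ upset_core] by blast
    then show "\<exists>V\<in>ClopSUp T le. F \<subseteq> V \<and> V \<subseteq> U"
      using exists_ClopSUp_between[OF P \<open>closedin T F\<close>] by blast
  next
    assume covered: "\<forall>F. scott_upset T le F \<and> F \<subseteq> ker T le U \<longrightarrow>
      (\<exists>V\<in>ClopSUp T le. F \<subseteq> V \<and> V \<subseteq> U)"
    show "U \<inter> spatial_part T le \<subseteq> core T le U"
    proof
      fix y assume y: "y \<in> U \<inter> spatial_part T le"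
      then have yX: "y \<in> topspace T" by (simp add: spatial_part_def)
      have "y \<in> ker T le U"
        using spatial_mem_upset_of_mem_closure[OF P _ upset_ker[of T le U]]
          continuous_L_space_dense_ker[OF cL U] y by blast
      then have "{u \<in> topspace T. le y u} \<subseteq> ker T le U"
        using upsetD[OF upset_ker[of T le U]] by blast
      moreover have "scott_upset T le {u \<in> topspace T. le y u}"
        using scott_upset_principal[OF P] y by blast
      ultimately obtain V where "V \<in> ClopSUp T le" "{u \<in> topspace T. le y u} \<subseteq> V" "V \<subseteq> U"
        using covered by blast
      moreover have "y \<in> {u \<in> topspace T. le y u}"
        using yX priestley_refl[OF P yX] by blast
      ultimately show "y \<in> core T le U"
        unfolding mem_core_iff by blast
    qed
  qed
qed

theorem lemma4p6:
  fixes T :: "'a topology" and le :: "'a \<Rightarrow> 'a \<Rightarrow> bool" and U :: "'a set"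
  assumes "continuous_L_space T le"
    and "U \<in> ClopUp T le"
  defines "Y \<equiv> spatial_part T le"
  shows "(ker T le U = core T le U \<longleftrightarrow> U \<subseteq> T closure_of (core T le U))
       \<and> (U \<subseteq> T closure_of (core T le U) \<longleftrightarrow>
            (\<forall>y \<in> U \<inter> Y. \<exists>V \<in> ClopSUp T le. y \<in> V \<and> V \<subseteq> U))
       \<and> ((\<forall>y \<in> U \<inter> Y. \<exists>V \<in> ClopSUp T le. y \<in> V \<and> V \<subseteq> U) \<longleftrightarrow>
            (\<forall>F. scott_upset T le F \<and> F \<subseteq> ker T le U \<longrightarrow>
                 (\<exists>V \<in> ClopSUp T le. F \<subseteq> V \<and> V \<subseteq> U)))"
proof -
  have spatial_core: "(\<forall>y \<in> U \<inter> Y. \<exists>V \<in> ClopSUp T le. y \<in> V \<and> V \<subseteq> U)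
      \<longleftrightarrow> U \<inter> spatial_part T le \<subseteq> core T le U"
    by (auto simp: Y_def mem_core_iff)
  show ?thesis
    unfolding spatial_core
    using ker_eq_core_iff_dense_core[OF assms(1,2)] dense_core_iff_spatial_subset_core[OF assms(1,2)]
      spatial_subset_core_iff_scott_upsets_covered[OF assms(1,2)] by blast
qed

end
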